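(* Let $Y=f(\boldsymbol X^\intercal\boldsymbol\beta,\varepsilon)$ with $\boldsymbol X\sim N_p(0,\mathbb{I}_p)$, $\varepsilon$ independent of $\boldsymbol X$, $Y$ continuously distributed, and $\boldsymbol\beta$ with entries in $\{\pm1/\sqrt s,0\}$. For $j\in\operatorname{supp}(\boldsymbol\beta)$ with $\operatorname{Var}(\mathfrak m_j(Y))>0$ define the standardized centered inverse regression curve $\mathfrak m(y)=\operatorname{sign}(\beta_j)\mathfrak m_j(y)/\sqrt{\operatorname{Var}(\mathfrak m_j(Y))}$. Let $\xi>0$ and assume: (i) for every $B>0$, $\lim_{r\to\infty}\sup_{b\in\Pi_r(B)}r^{-1/(2+\xi)}\sum_{i=2}^r|\mathfrak m(b_i)-\mathfrak m(b_{i-1})|=0$; (ii) there exist $B_0>0$ and a non-decreasing function $\widetilde{\mathfrak m}:(B_0,\infty)\to\mathbb R$ such that $|\mathfrak m(x)-\mathfrak m(y)|\le|\widetilde{\mathfrak m}(|x|)-\widetilde{\mathfrak m}(|y|)|$ whenever $x,y\in(-\infty,-B_0)$ or $x,y\in(B_0,+\infty)$, and $\mathbb E[|\widetilde{\mathfrak m}(|Y|)|^{2+\xi}]<\infty$ (where $\widetilde{\mathfrak m}(y):=0$ for $|y|\le B_0$ in this expectation). Then for any fixed $0<l<1<K$, $$\lim_{H\to\infty}\sup_{a\in\mathcal A_H(l,K)}\frac{1}{H^{2/(2+\xi)}}\sum_{h=1}^H\operatorname{Var}[\mathfrak m(Y)\mid a_h<Y\le a_{h+1}]=0.$$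
   Context: $\mathfrak m_j(y)=\mathbb E[\boldsymbol X^j\mid Y=y]$. $\mathcal A_H(l,K)$ denotes the set of all partitions $-\infty=a_1\le a_2\le\dots\le a_{H+1}=+\infty$ of $\mathbb R$ such that $\frac lH\le\mathbb P(a_h\le Y\le a_{h+1})\le\frac KH$ for all $h\in[H]$. For $B>0$, $\Pi_r(B)$ denotes the set of all choices of $r$ points $-B\le b_1\le b_2\le\dots\le b_r\le B$ in $[-B,B]$. *)

theory Defs
  imports "HOL-Probability.Probability"
begin

definition Pi_pts :: "nat \<Rightarrow> real \<Rightarrow> (nat \<Rightarrow> real) set" where
  "Pi_pts r B = {b. (\<forall>i\<in>{1..r}. -B \<le> b i \<and> b i \<le> B) \<and> (\<forall>i\<in>{1..<r}. b i \<le> b (Suc i))}"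

definition A_part :: "'a measure \<Rightarrow> ('a \<Rightarrow> real) \<Rightarrow> nat \<Rightarrow> real \<Rightarrow> real \<Rightarrow> (nat \<Rightarrow> ereal) set" where
  "A_part M Y H l K = {a. a 1 = -\<infinity> \<and> a (Suc H) = \<infinity> \<and>
     (\<forall>h\<in>{1..H}. a h \<le> a (Suc h)) \<and>
     (\<forall>h\<in>{1..H}. l / real H \<le> measure M {\<omega>\<in>space M. a h \<le> ereal (Y \<omega>) \<and> ereal (Y \<omega>) \<le> a (Suc h)}
                \<and> measure M {\<omega>\<in>space M. a h \<le> ereal (Y \<omega>) \<and> ereal (Y \<omega>) \<le> a (Suc h)} \<le> K / real H)}"

definition cond_var_event :: "'a measure \<Rightarrow> ('a \<Rightarrow> real) \<Rightarrow> 'a set \<Rightarrow> real" where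
  "cond_var_event M Z S =
     (let \<mu> = (\<integral>\<omega>. indicator S \<omega> * Z \<omega> \<partial>M) / measure M S
      in (\<integral>\<omega>. indicator S \<omega> * (Z \<omega> - \<mu>)\<^sup>2 \<partial>M) / measure M S)"

end

theory Submission
  imports Defs
begin

text \<open>
  On each of the \<open>H - 2\<close> inner slices the
  conditional variance of \<open>m(Y)\<close> is at most the squared oscillation of \<open>m\<close> over the slice.
  Splitting \<open>m\<close> into its values on \<open>[-B, B]\<close> and a tail controlled by the monotone majorant of (ii),
  the sum of these oscillations is at most the variation of (i) along an interleaved configuration
  of \<open>2(H - 2)\<close> points plus a telescoping sum of majorant increments, both of order \<open>s H\<^bsup>1/q\<^esup>\<close>
  for any \<open>s > 0\<close> once \<open>H\<close> is large (\<open>q = 2 + \<xi>\<close>). The two unbounded outer slices are controlled by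
  the \<open>q\<close>-th moment of the majorant: by uniform integrability it is at most \<open>l s\<^sup>q\<close> on every set of
  probability at most \<open>K / H\<close>, which bounds the majorant at the innermost cut points and, through
  \<open>v\<^sup>2 \<le> u\<^sup>2 + v\<^sup>q / u\<^bsup>q-2\<^esup>\<close>, the conditional second moment on the outer slices. Hence the sum
  of the slice variances is at most \<open>33 s\<^sup>2 H\<^bsup>2/q\<^esup>\<close>.
\<close>

lemma square_le_truncated_powr:
  fixes v u q :: real
  assumes "0 \<le> v" "0 < u" "2 \<le> q"
  shows "v\<^sup>2 \<le> u\<^sup>2 + v powr q / u powr (q - 2)"
proof (cases "v \<le> u")
  case True
  then show ?thesis
    using assms by (simp add: power_mono add_increasing2)
next
  case False
  then have "v\<^sup>2 * u powr (q - 2) \<le> v powr 2 * v powr (q - 2)"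
    using assms by (intro mult_mono powr_mono2) auto
  also have "\<dots> = v powr q"
    by (simp add: powr_add[symmetric])
  finally show ?thesis
    using assms by (simp add: le_divide_eq add_increasing)
qed

lemma sum_power2_le_power2_sum:
  fixes x :: "'b \<Rightarrow> real"
  assumes "finite I" and "\<forall>i\<in>I. 0 \<le> x i"
  shows "(\<Sum>i\<in>I. (x i)\<^sup>2) \<le> (\<Sum>i\<in>I. x i)\<^sup>2"
proof -
  have "(\<Sum>i\<in>I. (x i)\<^sup>2) \<le> (\<Sum>i\<in>I. x i * (\<Sum>j\<in>I. x j))"
    using assms by (intro sum_mono) (auto simp: power2_eq_square intro!: mult_left_mono member_le_sum)
  also have "\<dots> = (\<Sum>i\<in>I. x i)\<^sup>2"
    by (simp add: power2_eq_square sum_distrib_right)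
  finally show ?thesis .
qed

lemma sum_Sup_le:
  fixes f :: "'i \<Rightarrow> 'b \<Rightarrow> real"
  assumes "finite I" and "\<forall>i\<in>I. S i \<noteq> {}"
    and "\<And>y. \<forall>i\<in>I. y i \<in> S i \<Longrightarrow> (\<Sum>i\<in>I. f i (y i)) \<le> c"
  shows "(\<Sum>i\<in>I. Sup (f i ` S i)) \<le> c"
  using assms
proof (induction I arbitrary: c rule: finite_induct)
  case empty
  then show ?case
    by simp
next
  case (insert j I)
  \<comment> \<open>fixing the coordinate \<open>j\<close> at \<open>t\<close> leaves a problem of the same kind on \<open>I\<close>\<close>
  have "(\<Sum>i\<in>I. Sup (f i ` S i)) \<le> c - f j t" if t: "t \<in> S j" for t
  proof (rule insert.IH)
    fix y assume y: "\<forall>i\<in>I. y i \<in> S i"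
    have "(\<Sum>i\<in>I. f i ((y(j := t)) i)) = (\<Sum>i\<in>I. f i (y i))"
      using insert.hyps(2) by (intro sum.cong) auto
    moreover have "\<forall>i\<in>insert j I. (y(j := t)) i \<in> S i"
      using y t by auto
    ultimately show "(\<Sum>i\<in>I. f i (y i)) \<le> c - f j t"
      using insert.prems(2) insert.hyps by fastforce
  qed (use insert.prems in auto)
  then have "Sup (f j ` S j) \<le> c - (\<Sum>i\<in>I. Sup (f i ` S i))"
    using insert.prems by (intro cSup_least) force+
  then show ?case
    using insert.hyps by simp
qed

lemma le_of_powr_normalized_le:
  fixes r H q s S :: real
  assumes "r powr (- 1 / q) * S \<le> s / 2" and "0 < r" "r \<le> 2 * H" and "1 \<le> q" "0 \<le> s"
  shows "S \<le> s * H powr (1 / q)"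
proof -
  have "r powr (- 1 / q) = 1 / r powr (1 / q)"
    using powr_minus_divide[of r "1 / q"] by simp
  with assms have "S \<le> s / 2 * r powr (1 / q)"
    by (simp add: pos_divide_le_eq)
  also have "\<dots> \<le> s / 2 * (2 powr (1 / q) * H powr (1 / q))"
    using assms by (intro mult_left_mono) (auto simp: powr_mult[symmetric] intro!: powr_mono2)
  also have "\<dots> \<le> s / 2 * (2 * H powr (1 / q))"
    using assms powr_mono[of "1 / q" 1 2] by (intro mult_left_mono mult_right_mono) auto
  finally show ?thesis
    by simp
qed

section \<open>Conditional variances over events\<close>

lemma cond_var_event_le_integral:
  fixes Z D :: "'a \<Rightarrow> real"
  assumes "prob_space M" and S: "S \<in> sets M" and S_pos: "0 < measure M S"
    and Z: "Z \<in> borel_measurable M" and D: "integrable M (\<lambda>\<omega>. indicator S \<omega> * D \<omega>)"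
    and bound: "\<And>\<omega>. \<omega> \<in> S \<Longrightarrow> (Z \<omega> - c)\<^sup>2 \<le> D \<omega>"
  shows "cond_var_event M Z S \<le> (\<integral>\<omega>. indicator S \<omega> * D \<omega> \<partial>M) / measure M S"
proof -
  interpret prob_space M by fact
  define p where "p = measure M S"
  define \<mu> where "\<mu> = (\<integral>\<omega>. indicator S \<omega> * Z \<omega> \<partial>M) / p"
  have int_S: "integrable M (indicator S :: 'a \<Rightarrow> real)"
    using S by (simp add: less_top[symmetric])
  have integral_S: "integral\<^sup>L M (indicator S :: 'a \<Rightarrow> real) = p"
    using S by (simp add: p_def)
  have int_sq: "integrable M (\<lambda>\<omega>. indicator S \<omega> * (Z \<omega> - c)\<^sup>2)"
    by (rule Bochner_Integration.integrable_bound[OF D])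
       (use S Z bound in \<open>auto simp: indicator_def intro: order_trans[OF _ abs_ge_self]\<close>)
  have abs_le: "\<bar>t\<bar> \<le> 1 + t\<^sup>2" for t :: real
    using zero_le_power2[of "\<bar>t\<bar> - 1/2"] by (simp add: power2_eq_square algebra_simps)
  have int_lin: "integrable M (\<lambda>\<omega>. indicator S \<omega> * (Z \<omega> - c))"
  proof (rule Bochner_Integration.integrable_bound[OF Bochner_Integration.integrable_add[OF int_S int_sq]])
    show "AE \<omega> in M. norm (indicator S \<omega> * (Z \<omega> - c)) \<le> norm (indicator S \<omega> + indicator S \<omega> * (Z \<omega> - c)\<^sup>2)"
      by (intro AE_I2) (auto simp: indicator_def abs_le)
  qed (use S Z in simp)
  have split_Z: "(\<lambda>\<omega>. indicator S \<omega> * Z \<omega>) = (\<lambda>\<omega>. indicator S \<omega> * (Z \<omega> - c) + c * indicator S \<omega>)"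
    by (simp add: algebra_simps)
  have "(\<integral>\<omega>. indicator S \<omega> * Z \<omega> \<partial>M) = (\<integral>\<omega>. indicator S \<omega> * (Z \<omega> - c) \<partial>M) + c * p"
    unfolding split_Z using int_lin int_S integral_S by simp
  then have integral_lin: "(\<integral>\<omega>. indicator S \<omega> * (Z \<omega> - c) \<partial>M) = (\<mu> - c) * p"
    using S_pos by (simp add: \<mu>_def p_def field_simps)
  have "(\<lambda>\<omega>. indicator S \<omega> * (Z \<omega> - \<mu>)\<^sup>2) = (\<lambda>\<omega>. indicator S \<omega> * (Z \<omega> - c)\<^sup>2
          - 2 * (\<mu> - c) * (indicator S \<omega> * (Z \<omega> - c)) + (\<mu> - c)\<^sup>2 * indicator S \<omega>)"
    by (auto simp: indicator_def power2_eq_square algebra_simps)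
  then have "(\<integral>\<omega>. indicator S \<omega> * (Z \<omega> - \<mu>)\<^sup>2 \<partial>M)
      = (\<integral>\<omega>. indicator S \<omega> * (Z \<omega> - c)\<^sup>2 \<partial>M) - (\<mu> - c)\<^sup>2 * p"
    using int_sq int_lin int_S integral_S integral_lin by (simp add: power2_eq_square)
  also have "\<dots> \<le> (\<integral>\<omega>. indicator S \<omega> * (Z \<omega> - c)\<^sup>2 \<partial>M)"
    using S_pos by (simp add: p_def)
  also have "\<dots> \<le> (\<integral>\<omega>. indicator S \<omega> * D \<omega> \<partial>M)"
    using bound by (intro integral_mono[OF int_sq D]) (auto simp: indicator_def)
  finally show ?thesis
    unfolding cond_var_event_def Let_def \<mu>_def p_def using S_pos by (simp add: divide_right_mono)
qed

lemma cond_var_event_le_square: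
  fixes Z :: "'a \<Rightarrow> real"
  assumes "prob_space M" and S: "S \<in> sets M" and S_pos: "0 < measure M S"
    and Z: "Z \<in> borel_measurable M" and bound: "\<forall>\<omega>\<in>S. \<bar>Z \<omega> - c\<bar> \<le> d"
  shows "cond_var_event M Z S \<le> d\<^sup>2"
proof -
  interpret prob_space M by fact
  have "cond_var_event M Z S \<le> (\<integral>\<omega>. indicator S \<omega> * d\<^sup>2 \<partial>M) / measure M S"
  proof (rule cond_var_event_le_integral[OF \<open>prob_space M\<close> S S_pos Z])
    show "integrable M (\<lambda>\<omega>. indicator S \<omega> * d\<^sup>2)"
      using S by (simp add: less_top[symmetric])
    show "(Z \<omega> - c)\<^sup>2 \<le> d\<^sup>2" if "\<omega> \<in> S" for \<omega>
      using bound that power_mono[OF _ abs_ge_zero, of "Z \<omega> - c" d 2] by simp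
  qed
  also have "\<dots> = d\<^sup>2"
    using S S_pos by simp
  finally show ?thesis .
qed

lemma integral_indicator_small:
  fixes F :: "'a \<Rightarrow> real"
  assumes "prob_space M" and F: "integrable M F" and F_nonneg: "\<And>x. x \<in> space M \<Longrightarrow> 0 \<le> F x"
    and "0 < \<eta>"
  shows "\<exists>\<rho>>0. \<forall>A\<in>sets M. measure M A \<le> \<rho> \<longrightarrow> (\<integral>x. indicator A x * F x \<partial>M) \<le> \<eta>"
proof -
  interpret prob_space M by fact
  define overshoot where "overshoot = (\<lambda>(n::nat) x. F x - min (F x) (real n))"
  have overshoot_measurable: "overshoot n \<in> borel_measurable M" for n
    using F unfolding overshoot_def by measurable
  have overshoot_lim: "AE x in M. (\<lambda>n. overshoot n x) \<longlonglongrightarrow> 0"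
  proof (intro AE_I2 tendsto_eventually)
    fix x
    obtain N :: nat where "F x \<le> real N"
      using real_arch_simple by blast
    then have "\<forall>n\<ge>N. overshoot n x = 0"
      unfolding overshoot_def by (smt (verit) of_nat_mono)
    then show "eventually (\<lambda>n. overshoot n x = 0) sequentially"
      unfolding eventually_sequentially by blast
  qed
  have overshoot_dominated: "AE x in M. norm (overshoot n x) \<le> F x" for n
    using F_nonneg unfolding overshoot_def by (intro AE_I2) auto
  have overshoot_integrable: "integrable M (overshoot n)" for n
    by (rule integrable_dominated_convergence2[OF _ overshoot_measurable F overshoot_lim overshoot_dominated]) simp
  have "(\<lambda>n. integral\<^sup>L M (overshoot n)) \<longlonglongrightarrow> 0"
    using integral_dominated_convergence[OF _ overshoot_measurable F overshoot_lim overshoot_dominated] by simp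
  then obtain N where N: "integral\<^sup>L M (overshoot N) < \<eta> / 2"
    using \<open>0 < \<eta>\<close> by (metis half_gt_zero_iff order_tendstoD(2) eventually_sequentially order_refl)
  define \<rho> where "\<rho> = \<eta> / (2 * (real N + 1))"
  have "(\<integral>x. indicator A x * F x \<partial>M) \<le> \<eta>" if A: "A \<in> sets M" "measure M A \<le> \<rho>" for A
  proof -
    have int_A: "integrable M (indicator A :: 'a \<Rightarrow> real)"
      using A by (simp add: less_top[symmetric])
    have int_bound: "integrable M (\<lambda>x. real N * indicator A x + overshoot N x)"
      using int_A overshoot_integrable by simp
    have int_AF: "integrable M (\<lambda>x. indicator A x * F x)"
      using integrable_mult_indicator[OF A(1) F] by simp
    have "(\<integral>x. indicator A x * F x \<partial>M) \<le> (\<integral>x. real N * indicator A x + overshoot N x \<partial>M)"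
      using F_nonneg by (intro integral_mono[OF int_AF int_bound])
        (auto simp: overshoot_def indicator_def)
    also have "\<dots> = real N * measure M A + integral\<^sup>L M (overshoot N)"
      using int_A overshoot_integrable A by simp
    also have "\<dots> \<le> (real N + 1) * \<rho> + \<eta> / 2"
      using A N \<open>0 < \<eta>\<close> by (intro add_mono mult_mono) (auto simp: \<rho>_def)
    also have "\<dots> = \<eta>"
      by (simp add: \<rho>_def field_simps)
    finally show ?thesis .
  qed
  moreover have "0 < \<rho>"
    using \<open>0 < \<eta>\<close> by (simp add: \<rho>_def)
  ultimately show ?thesis
    by blast
qed

lemma le_of_powr_moment:
  fixes V :: "'a \<Rightarrow> real"
  assumes "prob_space M" and T: "T \<in> sets M" and p: "0 < p" "p \<le> measure M T"
    and "0 < q" "0 \<le> u" and V: "integrable M (\<lambda>\<omega>. V \<omega> powr q)"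
    and moment: "(\<integral>\<omega>. indicator T \<omega> * V \<omega> powr q \<partial>M) \<le> p * u powr q"
    and g: "0 \<le> g" "\<forall>\<omega>\<in>T. g \<le> V \<omega>"
  shows "g \<le> u"
proof (rule ccontr)
  interpret prob_space M by fact
  have int_g: "integrable M (\<lambda>\<omega>. indicator T \<omega> * g powr q)"
    using T by (simp add: less_top[symmetric])
  have int_V: "integrable M (\<lambda>\<omega>. indicator T \<omega> * V \<omega> powr q)"
    using integrable_mult_indicator[OF T V] by simp
  assume "\<not> g \<le> u"
  then have "p * u powr q < measure M T * g powr q"
    using p \<open>0 < q\<close> \<open>0 \<le> u\<close> by (intro mult_le_less_imp_less powr_less_mono2) auto
  also have "\<dots> = (\<integral>\<omega>. indicator T \<omega> * g powr q \<partial>M)"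
    using T by simp
  also have "\<dots> \<le> (\<integral>\<omega>. indicator T \<omega> * V \<omega> powr q \<partial>M)"
    using g T \<open>0 < q\<close>
    by (intro integral_mono[OF int_g int_V]) (auto simp: indicator_def intro!: powr_mono2)
  finally show False
    using moment by simp
qed

lemma cond_var_event_le_of_powr_moment:
  fixes Z V :: "'a \<Rightarrow> real"
  assumes "prob_space M" and T: "T \<in> sets M" and p: "0 < p" "p \<le> measure M T"
    and q: "2 \<le> q" and u: "0 < u" and Z: "Z \<in> borel_measurable M"
    and V: "integrable M (\<lambda>\<omega>. V \<omega> powr q)" and V_nonneg: "\<forall>\<omega>\<in>T. 0 \<le> V \<omega>"
    and moment: "(\<integral>\<omega>. indicator T \<omega> * V \<omega> powr q \<partial>M) \<le> p * u powr q"
    and bound: "\<forall>\<omega>\<in>T. \<bar>Z \<omega> - c\<bar> \<le> d + V \<omega>"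
  shows "cond_var_event M Z T \<le> 2 * d\<^sup>2 + 4 * u\<^sup>2"
proof -
  interpret prob_space M by fact
  define k where "k = 2 / u powr (q - 2)"
  define D where "D = (\<lambda>\<omega>. 2 * d\<^sup>2 + 2 * u\<^sup>2 + k * V \<omega> powr q)"
  have T_pos: "0 < measure M T"
    using p by linarith
  have int_T: "integrable M (indicator T :: 'a \<Rightarrow> real)"
    using T by (simp add: less_top[symmetric])
  have int_TV: "integrable M (\<lambda>\<omega>. indicator T \<omega> * V \<omega> powr q)"
    using integrable_mult_indicator[OF T V] by simp
  have D_eq: "(\<lambda>\<omega>. indicator T \<omega> * D \<omega>)
      = (\<lambda>\<omega>. (2 * d\<^sup>2 + 2 * u\<^sup>2) * indicator T \<omega> + k * (indicator T \<omega> * V \<omega> powr q))"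
    by (auto simp: D_def algebra_simps)
  have "cond_var_event M Z T \<le> (\<integral>\<omega>. indicator T \<omega> * D \<omega> \<partial>M) / measure M T"
  proof (rule cond_var_event_le_integral[OF \<open>prob_space M\<close> T T_pos Z])
    show "integrable M (\<lambda>\<omega>. indicator T \<omega> * D \<omega>)"
      unfolding D_eq using int_T int_TV by simp
    fix \<omega> assume "\<omega> \<in> T"
    then have "(Z \<omega> - c)\<^sup>2 \<le> (d + V \<omega>)\<^sup>2"
      using bound power_mono[OF _ abs_ge_zero, of "Z \<omega> - c" "d + V \<omega>" 2] by simp
    also have "\<dots> \<le> 2 * d\<^sup>2 + 2 * (V \<omega>)\<^sup>2"
      using zero_le_power2[of "d - V \<omega>"] by (simp add: power2_eq_square algebra_simps)
    also have "\<dots> \<le> D \<omega>"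
      using square_le_truncated_powr[of "V \<omega>" u q] V_nonneg \<open>\<omega> \<in> T\<close> u q by (simp add: D_def k_def)
    finally show "(Z \<omega> - c)\<^sup>2 \<le> D \<omega>" .
  qed
  also have "(\<integral>\<omega>. indicator T \<omega> * D \<omega> \<partial>M)
      = (2 * d\<^sup>2 + 2 * u\<^sup>2) * measure M T + k * (\<integral>\<omega>. indicator T \<omega> * V \<omega> powr q \<partial>M)"
    unfolding D_eq using int_T int_TV T by simp
  also have "\<dots> \<le> (2 * d\<^sup>2 + 2 * u\<^sup>2) * measure M T + k * (p * u powr q)"
    using moment u by (intro add_left_mono mult_left_mono) (auto simp: k_def)
  also have "k * (p * u powr q) = 2 * u\<^sup>2 * p"
    using u by (simp add: k_def powr_diff powr_numeral)
  also have "((2 * d\<^sup>2 + 2 * u\<^sup>2) * measure M T + 2 * u\<^sup>2 * p) / measure M T \<le> 2 * d\<^sup>2 + 4 * u\<^sup>2"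
    using p T_pos mult_right_mono[OF p(2), of "u\<^sup>2"] by (simp add: divide_le_eq algebra_simps)
  finally show ?thesis
    using T_pos by (simp add: divide_right_mono)
qed

section \<open>Variation along point configurations\<close>

definition clip :: "real \<Rightarrow> real \<Rightarrow> real" where
  "clip B x = max (- B) (min B x)"

lemma clip_mono: "x \<le> y \<Longrightarrow> clip B x \<le> clip B y"
  by (auto simp: clip_def)

lemma clip_bounds: "0 \<le> B \<Longrightarrow> - B \<le> clip B x \<and> clip B x \<le> B"
  by (auto simp: clip_def)

lemma clip_oscillation_le_variation:
  fixes m :: "real \<Rightarrow> real"
  assumes variation: "\<forall>b\<in>Pi_pts r B. (\<Sum>i=2..r. \<bar>m (b i) - m (b (i - 1))\<bar>) \<le> u"
    and "2 \<le> r" "0 \<le> B"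
  shows "\<bar>m (clip B x) - m (clip B y)\<bar> \<le> u"
proof -
  define lo hi where "lo = min (clip B x) (clip B y)" and "hi = max (clip B x) (clip B y)"
  define b where "b = (\<lambda>i::nat. if i = 1 then lo else hi)"
  have b: "b \<in> Pi_pts r B"
    using clip_bounds[OF \<open>0 \<le> B\<close>, of x] clip_bounds[OF \<open>0 \<le> B\<close>, of y]
    by (auto simp: Pi_pts_def b_def lo_def hi_def)
  have "(\<Sum>i=2..r. \<bar>m (b i) - m (b (i - 1))\<bar>) = (\<Sum>i=2..r. if i = 2 then \<bar>m hi - m lo\<bar> else 0)"
    by (intro sum.cong) (auto simp: b_def)
  also have "\<dots> = \<bar>m (clip B x) - m (clip B y)\<bar>"
    using \<open>2 \<le> r\<close> by (auto simp: sum.delta lo_def hi_def min_def max_def abs_minus_commute)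
  finally show ?thesis
    using variation b by metis
qed

lemma interleaved_variation_le:
  fixes m :: "real \<Rightarrow> real" and \<alpha> y :: "nat \<Rightarrow> real"
  assumes interleaved: "\<forall>h\<in>{2..n+1}. \<alpha> h \<le> y h \<and> y h \<le> \<alpha> (h + 1)" and "0 \<le> B"
  shows "\<exists>b\<in>Pi_pts (2 * n) B. (\<Sum>h=2..n+1. \<bar>m (clip B (y h)) - m (clip B (\<alpha> (h + 1)))\<bar>)
           \<le> (\<Sum>i=2..2*n. \<bar>m (b i) - m (b (i - 1))\<bar>)"
proof -
  \<comment> \<open>the points \<open>y 2 \<le> \<alpha> 3 \<le> y 3 \<le> \<dots> \<le> y (n + 1) \<le> \<alpha> (n + 2)\<close>, clipped to \<open>[-B, B]\<close>\<close>
  define b where "b = (\<lambda>i. if even i then clip B (\<alpha> (i div 2 + 2)) else clip B (y (i div 2 + 2)))"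
  have "b \<in> Pi_pts (2 * n) B"
    unfolding Pi_pts_def
  proof (intro CollectI conjI ballI)
    fix i assume "i \<in> {1..2*n}"
    show "- B \<le> b i" "b i \<le> B"
      using clip_bounds[OF \<open>0 \<le> B\<close>] unfolding b_def by auto
  next
    fix i assume i: "i \<in> {1..<2*n}"
    show "b i \<le> b (Suc i)"
    proof (cases "even i")
      case True
      then obtain k where "i = 2 * k" "1 \<le> k" "k + 1 \<le> n"
        using i by (auto elim: evenE)
      then show ?thesis
        using interleaved[rule_format, of "k + 2"] by (auto simp: b_def intro: clip_mono)
    next
      case False
      then obtain k where "i = 2 * k + 1" "k + 1 \<le> n"
        using i by (auto elim: oddE)
      then show ?thesis
        using interleaved[rule_format, of "k + 2"] by (auto simp: b_def intro: clip_mono)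
    qed
  qed
  have "(\<Sum>h=2..n+1. \<bar>m (clip B (y h)) - m (clip B (\<alpha> (h + 1)))\<bar>)
      = (\<Sum>k=1..n. \<bar>m (b (2 * k)) - m (b (2 * k - 1))\<bar>)"
  proof (rule sum.reindex_bij_witness[where i="\<lambda>k. k + 1" and j="\<lambda>h. h - 1"])
    fix h assume "h \<in> {2..n+1}"
    then have "odd (2 * (h - 1) - 1)" "(2 * (h - 1) - 1) div 2 + 2 = h" "2 * (h - 1) div 2 + 2 = h + 1"
      by auto
    then show "\<bar>m (b (2 * (h - 1))) - m (b (2 * (h - 1) - 1))\<bar>
        = \<bar>m (clip B (y h)) - m (clip B (\<alpha> (h + 1)))\<bar>"
      by (simp add: b_def abs_minus_commute)
  qed auto
  also have "\<dots> = (\<Sum>i\<in>(\<lambda>k. 2 * k) ` {1..n}. \<bar>m (b i) - m (b (i - 1))\<bar>)"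
    by (simp add: sum.reindex inj_on_def)
  also have "\<dots> \<le> (\<Sum>i=2..2*n. \<bar>m (b i) - m (b (i - 1))\<bar>)"
    by (rule sum_mono2) auto
  finally show ?thesis
    using \<open>b \<in> Pi_pts (2 * n) B\<close> by blast
qed

section \<open>Slices of a partition\<close>

definition slice :: "'a measure \<Rightarrow> ('a \<Rightarrow> real) \<Rightarrow> (nat \<Rightarrow> ereal) \<Rightarrow> nat \<Rightarrow> 'a set" where
  "slice M Y a h = {\<omega>\<in>space M. a h < ereal (Y \<omega>) \<and> ereal (Y \<omega>) \<le> a (Suc h)}"

lemma sets_slice:
  assumes "Y \<in> borel_measurable M"
  shows "slice M Y a h \<in> sets M"
  unfolding slice_def using assms by measurable

lemma A_part_mono:
  assumes "a \<in> A_part M Y H l K"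
  shows "mono_on {1..Suc H} a"
proof (rule mono_onI)
  fix i j :: nat assume i: "i \<in> {1..Suc H}" and "j \<in> {1..Suc H}" "i \<le> j"
  from \<open>i \<le> j\<close> \<open>j \<in> {1..Suc H}\<close> show "a i \<le> a j"
  proof (induction j rule: dec_induct)
    case (step n)
    then have "a n \<le> a (Suc n)"
      using assms i by (auto simp: A_part_def)
    moreover have "a i \<le> a n"
      using step i by auto
    ultimately show ?case
      by (rule order_trans[rotated])
  qed simp
qed

lemma measure_slice:
  assumes "prob_space M" and Y: "Y \<in> borel_measurable M"
    and atomless: "\<forall>y. measure M {\<omega>\<in>space M. Y \<omega> = y} = 0"
  shows "measure M (slice M Y a h) = measure M {\<omega>\<in>space M. a h \<le> ereal (Y \<omega>) \<and> ereal (Y \<omega>) \<le> a (Suc h)}"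
    (is "_ = measure M ?closed")
proof -
  interpret prob_space M by fact
  define atom where "atom = {\<omega>\<in>space M. Y \<omega> = real_of_ereal (a h)}"
  have sets: "slice M Y a h \<in> sets M" "?closed \<in> sets M" "atom \<in> sets M"
    unfolding slice_def atom_def using Y by measurable
  have "?closed \<subseteq> slice M Y a h \<union> atom"
  proof
    fix \<omega> assume "\<omega> \<in> ?closed"
    then show "\<omega> \<in> slice M Y a h \<union> atom"
      by (cases "a h = ereal (Y \<omega>)") (auto simp: slice_def atom_def order.order_iff_strict)
  qed
  then have "measure M ?closed \<le> measure M (slice M Y a h \<union> atom)"
    using sets by (intro finite_measure_mono) auto
  also have "\<dots> \<le> measure M (slice M Y a h)"
    using measure_Un_le[OF sets(1,3)] atomless by (simp add: atom_def)
  moreover have "measure M (slice M Y a h) \<le> measure M ?closed"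
    using sets by (intro finite_measure_mono) (auto simp: slice_def)
  ultimately show ?thesis
    by linarith
qed

lemma A_part_slices:
  assumes "prob_space M" and Y: "Y \<in> borel_measurable M"
    and atomless: "\<forall>y. measure M {\<omega>\<in>space M. Y \<omega> = y} = 0"
    and a: "a \<in> A_part M Y H l K" and "0 < l" "2 \<le> H"
  obtains \<alpha> where "mono_on {2..H} \<alpha>"
    and "slice M Y a 1 = {\<omega>\<in>space M. Y \<omega> \<le> \<alpha> 2}"
    and "slice M Y a H = {\<omega>\<in>space M. \<alpha> H < Y \<omega>}"
    and "\<forall>h\<in>{2..<H}. slice M Y a h = {\<omega>\<in>space M. \<alpha> h < Y \<omega> \<and> Y \<omega> \<le> \<alpha> (Suc h)}"
    and "\<forall>h\<in>{1..H}. l / H \<le> measure M (slice M Y a h) \<and> measure M (slice M Y a h) \<le> K / H"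
proof
  define \<alpha> where "\<alpha> = (\<lambda>h. real_of_ereal (a h))"
  have a_ends: "a 1 = - \<infinity>" "a (Suc H) = \<infinity>"
    using a by (auto simp: A_part_def)
  have mono: "mono_on {1..Suc H} a"
    by (rule A_part_mono[OF a])
  show measure: "\<forall>h\<in>{1..H}. l / H \<le> measure M (slice M Y a h) \<and> measure M (slice M Y a h) \<le> K / H"
    using a measure_slice[OF assms(1-3)] by (simp add: A_part_def)
  have nonempty: "slice M Y a h \<noteq> {}" if "h \<in> {1..H}" for h
  proof -
    have "0 < l / H"
      using \<open>0 < l\<close> \<open>2 \<le> H\<close> by simp
    show ?thesis
    proof
      assume "slice M Y a h = {}"
      then show False
        using measure[rule_format, OF that] \<open>0 < l / H\<close> by auto
    qed
  qed
  \<comment> \<open>the first and last slices have positive probability, so all inner cut points are finite\<close>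
  have "a 2 \<noteq> - \<infinity>" "a H \<noteq> \<infinity>"
    using nonempty[of 1] nonempty[of H] \<open>2 \<le> H\<close> by (auto simp: slice_def numeral_2_eq_2)
  then have finite: "a h = ereal (\<alpha> h)" if "h \<in> {2..H}" for h
    using mono_onD[OF mono, of 2 h] mono_onD[OF mono, of h H] that
    by (auto simp: \<alpha>_def intro!: ereal_real'[symmetric])
  show "mono_on {2..H} \<alpha>"
  proof (rule mono_onI)
    fix i j assume "i \<in> {2..H}" "j \<in> {2..H}" "i \<le> j"
    then show "\<alpha> i \<le> \<alpha> j"
      using mono_onD[OF mono, of i j] finite[of i] finite[of j] by simp
  qed
  show "slice M Y a 1 = {\<omega>\<in>space M. Y \<omega> \<le> \<alpha> 2}"
    using finite[of 2] a_ends \<open>2 \<le> H\<close> by (auto simp: slice_def numeral_2_eq_2)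
  show "slice M Y a H = {\<omega>\<in>space M. \<alpha> H < Y \<omega>}"
    using finite[of H] a_ends \<open>2 \<le> H\<close> by (auto simp: slice_def)
  show "\<forall>h\<in>{2..<H}. slice M Y a h = {\<omega>\<in>space M. \<alpha> h < Y \<omega> \<and> Y \<omega> \<le> \<alpha> (Suc h)}"
    using finite by (auto simp: slice_def)
qed

section \<open>Curves with a monotone tail majorant\<close>

locale tail_dominated = prob_space M for M :: "'a measure" +
  fixes Y :: "'a \<Rightarrow> real" and m mt :: "real \<Rightarrow> real" and B0 B :: real
  assumes Y_measurable: "Y \<in> borel_measurable M"
    and Y_atomless: "\<forall>y. measure M {\<omega>\<in>space M. Y \<omega> = y} = 0"
    and m_measurable: "m \<in> borel_measurable borel"
    and B0_pos: "0 < B0" and B0_less: "B0 < B"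
    and mt_mono: "mono_on {B0<..} mt"
    and tail: "\<forall>x y. ((x < - B0 \<and> y < - B0) \<or> (x > B0 \<and> y > B0)) \<longrightarrow>
                 \<bar>m x - m y\<bar> \<le> \<bar>mt \<bar>x\<bar> - mt \<bar>y\<bar>\<bar>"
begin

definition envelope :: "real \<Rightarrow> real" where
  "envelope x = mt (max x B)"

definition excess :: "'a \<Rightarrow> real" where
  "excess \<omega> = envelope \<bar>Y \<omega>\<bar> - mt B"

lemma envelope_mono: "mono envelope"
  using B0_less by (auto simp: envelope_def intro!: monoI mono_onD[OF mt_mono])

lemma envelope_ge: "mt B \<le> envelope x"
  using B0_less by (auto simp: envelope_def intro!: mono_onD[OF mt_mono])

lemma excess_nonneg: "0 \<le> excess \<omega>"
  using envelope_ge by (simp add: excess_def)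

lemma measurable_m_Y: "(\<lambda>\<omega>. m (Y \<omega>)) \<in> borel_measurable M"
  using measurable_compose[OF Y_measurable m_measurable] .

lemma tail_increment_right:
  assumes "B \<le> x" "x \<le> y"
  shows "\<bar>m x - m y\<bar> \<le> mt y - mt x"
proof -
  have "\<bar>x\<bar> = x" "\<bar>y\<bar> = y"
    using assms B0_pos B0_less by auto
  then show ?thesis
    using tail[rule_format, of x y] mono_onD[OF mt_mono, of x y] assms B0_less by auto
qed

lemma tail_increment_left:
  assumes "x \<le> y" "y \<le> - B"
  shows "\<bar>m x - m y\<bar> \<le> mt (- x) - mt (- y)"
proof -
  have "\<bar>x\<bar> = - x" "\<bar>y\<bar> = - y"
    using assms B0_pos B0_less by auto
  then show ?thesis
    using tail[rule_format, of x y] mono_onD[OF mt_mono, of "- y" "- x"] assms B0_less by auto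
qed

lemma tail_split:
  assumes "x \<le> y"
  shows "\<bar>m x - m y\<bar> \<le> \<bar>m (clip B x) - m (clip B y)\<bar> + (envelope y - envelope x)
           + (envelope (- x) - envelope (- y))"
proof -
  have B: "0 < B"
    using B0_pos B0_less by simp
  consider "y < - B" | "x < - B" "- B \<le> y" "y \<le> B" | "x < - B" "B < y"
    | "- B \<le> x" "y \<le> B" | "- B \<le> x" "x \<le> B" "B < y" | "B < x"
    using assms by linarith
  then show ?thesis
  proof cases
    case 1
    then show ?thesis
      using tail_increment_left[OF assms] B assms by (simp add: clip_def envelope_def max_def min_def)
  next
    case 2
    have "\<bar>m x - m y\<bar> \<le> \<bar>m x - m (- B)\<bar> + \<bar>m (- B) - m y\<bar>"
      by linarith
    then show ?thesis
      using 2 tail_increment_left[of x "- B"] B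
      by (simp add: clip_def envelope_def max_absorb1 max_absorb2 min_absorb2)
  next
    case 3
    have "\<bar>m x - m y\<bar> \<le> \<bar>m x - m (- B)\<bar> + \<bar>m (- B) - m B\<bar> + \<bar>m B - m y\<bar>"
      by linarith
    then show ?thesis
      using 3 tail_increment_left[of x "- B"] tail_increment_right[of B y] B
      by (simp add: clip_def envelope_def max_absorb1 max_absorb2 min_absorb1 min_absorb2)
  next
    case 4
    then show ?thesis
      using B assms by (simp add: clip_def envelope_def max_def min_def)
  next
    case 5
    have "\<bar>m x - m y\<bar> \<le> \<bar>m x - m B\<bar> + \<bar>m B - m y\<bar>"
      by linarith
    then show ?thesis
      using 5 tail_increment_right[of B y] B
      by (simp add: clip_def envelope_def max_absorb1 max_absorb2 min_absorb1 min_absorb2)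
  next
    case 6
    then show ?thesis
      using tail_increment_right[OF _ assms] B assms by (simp add: clip_def envelope_def max_def min_def)
  qed
qed

lemma deviation_le_gap:
  assumes "x \<le> y" "y \<le> z"
  shows "\<bar>m y - m z\<bar> \<le> \<bar>m (clip B y) - m (clip B z)\<bar>
           + ((envelope z - envelope x) + (envelope (- x) - envelope (- z)))"
  using tail_split[OF \<open>y \<le> z\<close>] monoD[OF envelope_mono, of x y] monoD[OF envelope_mono, of "- y" "- x"] assms
  by simp

lemma deviation_first_slice:
  assumes osc: "\<forall>x y. \<bar>m (clip B x) - m (clip B y)\<bar> \<le> u" and "Y \<omega> \<le> x" "x \<le> z"
  shows "\<bar>m (Y \<omega>) - m x\<bar> \<le> u + (envelope z - mt B) + excess \<omega>"
  using tail_split[OF \<open>Y \<omega> \<le> x\<close>] osc[rule_format, of "Y \<omega>" x] monoD[OF envelope_mono \<open>x \<le> z\<close>]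
    envelope_ge[of "Y \<omega>"] envelope_ge[of "- x"] monoD[OF envelope_mono abs_ge_minus_self[of "Y \<omega>"]]
  unfolding excess_def by linarith

lemma deviation_last_slice:
  assumes osc: "\<forall>x y. \<bar>m (clip B x) - m (clip B y)\<bar> \<le> u" and "z \<le> x" "x \<le> Y \<omega>"
  shows "\<bar>m (Y \<omega>) - m x\<bar> \<le> u + (envelope (- z) - mt B) + excess \<omega>"
  using tail_split[OF \<open>x \<le> Y \<omega>\<close>] osc[rule_format, of x "Y \<omega>"] monoD[OF envelope_mono, of "- x" "- z"]
    envelope_ge[of "- Y \<omega>"] envelope_ge[of x] monoD[OF envelope_mono abs_ge_self[of "Y \<omega>"]] \<open>z \<le> x\<close>
  unfolding excess_def by (simp add: abs_minus_commute)

lemma sum_Sup_deviation_le: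
  assumes \<alpha>: "mono_on {2..H} \<alpha>" and "3 \<le> H"
    and variation: "\<forall>b\<in>Pi_pts (2 * (H - 2)) B. (\<Sum>i=2..2*(H-2). \<bar>m (b i) - m (b (i - 1))\<bar>) \<le> u"
  shows "(\<Sum>h=2..H-1. Sup ((\<lambda>y. \<bar>m y - m (\<alpha> (Suc h))\<bar>) ` {\<alpha> h..\<alpha> (Suc h)}))
           \<le> u + (envelope (\<alpha> H) - mt B) + (envelope (- \<alpha> 2) - mt B)"
proof (rule sum_Sup_le)
  define gap where "gap = (\<lambda>h. (envelope (\<alpha> (Suc h)) - envelope (\<alpha> h)) + (envelope (- \<alpha> h) - envelope (- \<alpha> (Suc h))))"
  have "(\<Sum>h=2..H-1. gap h) = (envelope (\<alpha> H) - envelope (\<alpha> 2)) + (envelope (- \<alpha> 2) - envelope (- \<alpha> H))"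
    using sum_Suc_diff[of 2 "H - 1" "\<lambda>h. envelope (\<alpha> h)"] sum_Suc_diff[of 2 "H - 1" "\<lambda>h. envelope (- \<alpha> h)"] \<open>3 \<le> H\<close>
    by (simp add: gap_def sum.distrib sum_subtractf)
  also have "\<dots> \<le> (envelope (\<alpha> H) - mt B) + (envelope (- \<alpha> 2) - mt B)"
    using envelope_ge[of "\<alpha> 2"] envelope_ge[of "- \<alpha> H"] by simp
  finally have gap_sum: "(\<Sum>h=2..H-1. gap h) \<le> (envelope (\<alpha> H) - mt B) + (envelope (- \<alpha> 2) - mt B)" .
  fix y assume y: "\<forall>h\<in>{2..H-1}. y h \<in> {\<alpha> h..\<alpha> (Suc h)}"
  obtain b where "b \<in> Pi_pts (2 * (H - 2)) B"
    and interleaved: "(\<Sum>h=2..H-1. \<bar>m (clip B (y h)) - m (clip B (\<alpha> (h + 1)))\<bar>)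
        \<le> (\<Sum>i=2..2*(H-2). \<bar>m (b i) - m (b (i - 1))\<bar>)"
    using interleaved_variation_le[of "H - 2" \<alpha> y B m] y \<open>3 \<le> H\<close> B0_pos B0_less
    by (auto simp: Suc_diff_Suc numeral_2_eq_2)
  have "(\<Sum>h=2..H-1. \<bar>m (y h) - m (\<alpha> (Suc h))\<bar>)
      \<le> (\<Sum>h=2..H-1. \<bar>m (clip B (y h)) - m (clip B (\<alpha> (h + 1)))\<bar> + gap h)"
    using y by (intro sum_mono) (auto simp: gap_def intro: deviation_le_gap)
  also have "\<dots> \<le> u + ((envelope (\<alpha> H) - mt B) + (envelope (- \<alpha> 2) - mt B))"
    using interleaved variation \<open>b \<in> Pi_pts (2 * (H - 2)) B\<close> gap_sum by (auto simp: sum.distrib)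
  finally show "(\<Sum>h=2..H-1. \<bar>m (y h) - m (\<alpha> (Suc h))\<bar>)
      \<le> u + (envelope (\<alpha> H) - mt B) + (envelope (- \<alpha> 2) - mt B)"
    by simp
qed (use \<alpha> in \<open>auto intro!: mono_onD[OF \<alpha>]\<close>)

lemma integrable_excess_powr:
  assumes "0 < q"
    and tail_moment: "integrable M (\<lambda>\<omega>. \<bar>(if \<bar>Y \<omega>\<bar> \<le> B0 then 0 else mt \<bar>Y \<omega>\<bar>)\<bar> powr q)"
  shows "integrable M (\<lambda>\<omega>. excess \<omega> powr q)"
proof (rule Bochner_Integration.integrable_bound)
  show "integrable M (\<lambda>\<omega>. 2 powr q * (\<bar>(if \<bar>Y \<omega>\<bar> \<le> B0 then 0 else mt \<bar>Y \<omega>\<bar>)\<bar> powr q + \<bar>mt B\<bar> powr q))"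
    using tail_moment by simp
  show "(\<lambda>\<omega>. excess \<omega> powr q) \<in> borel_measurable M"
    using borel_measurable_mono[OF envelope_mono] Y_measurable
    unfolding excess_def by measurable
  show "AE \<omega> in M. norm (excess \<omega> powr q)
      \<le> norm (2 powr q * (\<bar>(if \<bar>Y \<omega>\<bar> \<le> B0 then 0 else mt \<bar>Y \<omega>\<bar>)\<bar> powr q + \<bar>mt B\<bar> powr q))"
  proof (intro AE_I2)
    fix \<omega>
    show "norm (excess \<omega> powr q)
      \<le> norm (2 powr q * (\<bar>(if \<bar>Y \<omega>\<bar> \<le> B0 then 0 else mt \<bar>Y \<omega>\<bar>)\<bar> powr q + \<bar>mt B\<bar> powr q))"
    proof (cases "\<bar>Y \<omega>\<bar> \<le> B")
      case True
      then show ?thesis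
        by (simp add: excess_def envelope_def max_absorb2)
    next
      case False
      define G where "G = \<bar>mt \<bar>Y \<omega>\<bar>\<bar>"
      have "excess \<omega> = mt \<bar>Y \<omega>\<bar> - mt B"
        using False by (simp add: excess_def envelope_def)
      then have "excess \<omega> \<le> 2 * max G \<bar>mt B\<bar>"
        by (simp add: G_def)
      then have "excess \<omega> powr q \<le> (2 * max G \<bar>mt B\<bar>) powr q"
        using excess_nonneg \<open>0 < q\<close> by (intro powr_mono2) auto
      also have "\<dots> \<le> 2 powr q * (G powr q + \<bar>mt B\<bar> powr q)"
        by (auto simp: powr_mult max_def intro!: mult_left_mono)
      finally show ?thesis
        using False B0_less by (simp add: G_def)
    qed
  qed
qed

lemma bdd_above_deviation:
  assumes "\<forall>x y. \<bar>m (clip B x) - m (clip B y)\<bar> \<le> u"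
  shows "bdd_above ((\<lambda>y. \<bar>m y - m z\<bar>) ` {x..z})"
  using assms deviation_le_gap[of x _ z]
  by (intro bdd_aboveI2[where M="u + ((envelope z - envelope x) + (envelope (- x) - envelope (- z)))"])
     (fastforce intro: order_trans)

lemma cond_var_boundary_slice:
  assumes T: "T \<in> sets M" and p: "0 < p" "p \<le> measure M T" and q: "2 \<le> q" and u: "0 < u"
    and excess_int: "integrable M (\<lambda>\<omega>. excess \<omega> powr q)"
    and moment: "(\<integral>\<omega>. indicator T \<omega> * excess \<omega> powr q \<partial>M) \<le> p * u powr q"
    and bound: "\<forall>\<omega>\<in>T. \<bar>m (Y \<omega>) - c\<bar> \<le> u + g + excess \<omega>" and g: "0 \<le> g" "g \<le> u"
  shows "cond_var_event M (\<lambda>\<omega>. m (Y \<omega>)) T \<le> 12 * u\<^sup>2"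
proof -
  have "cond_var_event M (\<lambda>\<omega>. m (Y \<omega>)) T \<le> 2 * (u + g)\<^sup>2 + 4 * u\<^sup>2"
    using excess_nonneg bound
    by (intro cond_var_event_le_of_powr_moment[OF prob_space_axioms T p q u measurable_m_Y excess_int _ moment])
       auto
  also have "\<dots> \<le> 12 * u\<^sup>2"
    using g power_mono[of "u + g" "2 * u" 2] by (simp add: power_mult_distrib)
  finally show ?thesis .
qed

lemma sum_middle_slice_cond_var_le:
  assumes \<alpha>: "mono_on {2..H} \<alpha>" and H: "3 \<le> H"
    and S_middle: "\<forall>h\<in>{2..<H}. slice M Y a h = {\<omega>\<in>space M. \<alpha> h < Y \<omega> \<and> Y \<omega> \<le> \<alpha> (Suc h)}"
    and S_pos: "\<forall>h\<in>{2..<H}. 0 < measure M (slice M Y a h)"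
    and variation: "\<forall>b\<in>Pi_pts (2 * (H - 2)) B. (\<Sum>i=2..2*(H-2). \<bar>m (b i) - m (b (i - 1))\<bar>) \<le> u"
  shows "(\<Sum>h=2..H-1. cond_var_event M (\<lambda>\<omega>. m (Y \<omega>)) (slice M Y a h))
           \<le> (u + (envelope (\<alpha> H) - mt B) + (envelope (- \<alpha> 2) - mt B))\<^sup>2"
proof -
  define dev where "dev = (\<lambda>h. Sup ((\<lambda>y. \<bar>m y - m (\<alpha> (Suc h))\<bar>) ` {\<alpha> h..\<alpha> (Suc h)}))"
  have osc: "\<forall>x y. \<bar>m (clip B x) - m (clip B y)\<bar> \<le> u"
    using clip_oscillation_le_variation[OF variation] H B0_pos B0_less by auto
  have dev_bound: "\<bar>m y - m (\<alpha> (Suc h))\<bar> \<le> dev h" if "y \<in> {\<alpha> h..\<alpha> (Suc h)}" for h y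
    unfolding dev_def using that bdd_above_deviation[OF osc] by (intro cSup_upper) auto
  have dev_nonneg: "0 \<le> dev h" if "h \<in> {2..H-1}" for h
    using dev_bound[of "\<alpha> (Suc h)" h] mono_onD[OF \<alpha>, of h "Suc h"] that H by auto
  have "(\<Sum>h=2..H-1. cond_var_event M (\<lambda>\<omega>. m (Y \<omega>)) (slice M Y a h)) \<le> (\<Sum>h=2..H-1. (dev h)\<^sup>2)"
  proof (rule sum_mono)
    fix h assume h: "h \<in> {2..H-1}"
    then have "\<forall>\<omega>\<in>slice M Y a h. \<bar>m (Y \<omega>) - m (\<alpha> (Suc h))\<bar> \<le> dev h"
      using S_middle H by (auto intro!: dev_bound)
    then show "cond_var_event M (\<lambda>\<omega>. m (Y \<omega>)) (slice M Y a h) \<le> (dev h)\<^sup>2"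
      using h H S_pos
      by (intro cond_var_event_le_square[OF prob_space_axioms sets_slice[OF Y_measurable] _ measurable_m_Y])
         auto
  qed
  also have "\<dots> \<le> (\<Sum>h=2..H-1. dev h)\<^sup>2"
    using dev_nonneg by (intro sum_power2_le_power2_sum) auto
  also have "\<dots> \<le> (u + (envelope (\<alpha> H) - mt B) + (envelope (- \<alpha> 2) - mt B))\<^sup>2"
    using sum_Sup_deviation_le[OF \<alpha> H variation] dev_nonneg
    by (intro power_mono sum_nonneg) (auto simp: dev_def)
  finally show ?thesis .
qed


lemma sum_slice_cond_var_le:
  assumes H: "3 \<le> H" and a: "a \<in> A_part M Y H l K" and "0 < l" and q: "2 \<le> q" and u: "0 < u"
    and excess_int: "integrable M (\<lambda>\<omega>. excess \<omega> powr q)"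
    and moment: "\<forall>T\<in>sets M. measure M T \<le> K / H \<longrightarrow>
                   (\<integral>\<omega>. indicator T \<omega> * excess \<omega> powr q \<partial>M) \<le> l / H * u powr q"
    and variation: "\<forall>b\<in>Pi_pts (2 * (H - 2)) B. (\<Sum>i=2..2*(H-2). \<bar>m (b i) - m (b (i - 1))\<bar>) \<le> u"
  shows "(\<Sum>h=1..H. cond_var_event M (\<lambda>\<omega>. m (Y \<omega>)) (slice M Y a h)) \<le> 33 * u\<^sup>2"
proof -
  let ?S = "slice M Y a" and ?Z = "\<lambda>\<omega>. m (Y \<omega>)"
  obtain \<alpha> where \<alpha>: "mono_on {2..H} \<alpha>"
    and S_first: "?S 1 = {\<omega>\<in>space M. Y \<omega> \<le> \<alpha> 2}"
    and S_last: "?S H = {\<omega>\<in>space M. \<alpha> H < Y \<omega>}"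
    and S_middle: "\<forall>h\<in>{2..<H}. ?S h = {\<omega>\<in>space M. \<alpha> h < Y \<omega> \<and> Y \<omega> \<le> \<alpha> (Suc h)}"
    and S_measure: "\<forall>h\<in>{1..H}. l / H \<le> measure M (?S h) \<and> measure M (?S h) \<le> K / H"
    using A_part_slices[OF prob_space_axioms Y_measurable Y_atomless a \<open>0 < l\<close>] H by auto
  note S_sets = sets_slice[OF Y_measurable]
  have p: "0 < l / H"
    using \<open>0 < l\<close> H by simp
  have S_moment: "\<forall>h\<in>{1..H}. (\<integral>\<omega>. indicator (?S h) \<omega> * excess \<omega> powr q \<partial>M) \<le> l / H * u powr q"
    using moment S_sets S_measure by blast
  have osc: "\<forall>x y. \<bar>m (clip B x) - m (clip B y)\<bar> \<le> u"
    using clip_oscillation_le_variation[OF variation] H B0_pos B0_less by auto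
  have "\<alpha> 2 \<le> \<alpha> H"
    using H by (intro mono_onD[OF \<alpha>]) auto
  have gap_last: "envelope (\<alpha> H) - mt B \<le> u"
  proof (rule le_of_powr_moment[OF prob_space_axioms S_sets p _ _ _ excess_int])
    show "\<forall>\<omega>\<in>?S H. envelope (\<alpha> H) - mt B \<le> excess \<omega>"
      unfolding S_last using monoD[OF envelope_mono order_trans[OF _ abs_ge_self]] by (auto simp: excess_def)
  qed (use S_measure S_moment H q u envelope_ge in auto)
  have gap_first: "envelope (- \<alpha> 2) - mt B \<le> u"
  proof (rule le_of_powr_moment[OF prob_space_axioms S_sets p _ _ _ excess_int])
    show "\<forall>\<omega>\<in>?S 1. envelope (- \<alpha> 2) - mt B \<le> excess \<omega>"
      unfolding S_first using monoD[OF envelope_mono order_trans[OF _ abs_ge_minus_self]] by (auto simp: excess_def)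
  qed (use S_measure S_moment H q u envelope_ge in auto)
  have first: "cond_var_event M ?Z (?S 1) \<le> 12 * u\<^sup>2"
  proof (rule cond_var_boundary_slice[OF S_sets p _ q u excess_int])
    show "\<forall>\<omega>\<in>?S 1. \<bar>m (Y \<omega>) - m (\<alpha> 2)\<bar> \<le> u + (envelope (\<alpha> H) - mt B) + excess \<omega>"
      unfolding S_first using deviation_first_slice[OF osc _ \<open>\<alpha> 2 \<le> \<alpha> H\<close>] by auto
  qed (use S_measure S_moment H gap_last envelope_ge in auto)
  have last: "cond_var_event M ?Z (?S H) \<le> 12 * u\<^sup>2"
  proof (rule cond_var_boundary_slice[OF S_sets p _ q u excess_int])
    show "\<forall>\<omega>\<in>?S H. \<bar>m (Y \<omega>) - m (\<alpha> H)\<bar> \<le> u + (envelope (- \<alpha> 2) - mt B) + excess \<omega>"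
      unfolding S_last using deviation_last_slice[OF osc \<open>\<alpha> 2 \<le> \<alpha> H\<close>] by auto
  qed (use S_measure S_moment H gap_first envelope_ge in auto)
  have "(\<Sum>h=2..H-1. cond_var_event M ?Z (?S h)) \<le> (u + (envelope (\<alpha> H) - mt B) + (envelope (- \<alpha> 2) - mt B))\<^sup>2"
    using S_measure p H
    by (intro sum_middle_slice_cond_var_le[OF \<alpha> H S_middle _ variation]) (auto intro: order_less_le_trans)
  also have "\<dots> \<le> (3 * u)\<^sup>2"
    using gap_first gap_last envelope_ge[of "\<alpha> H"] envelope_ge[of "- \<alpha> 2"] u by (intro power_mono) auto
  finally have middle: "(\<Sum>h=2..H-1. cond_var_event M ?Z (?S h)) \<le> 9 * u\<^sup>2"
    by (simp add: power_mult_distrib)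
  have "{1..H} = insert 1 (insert H {2..H-1})"
    using H by auto
  then show ?thesis
    using H first last middle by simp
qed


lemma scaled_sum_slice_cond_var_le:
  assumes H: "3 \<le> H" and a: "a \<in> A_part M Y H l K" and "0 < l" and q: "2 \<le> q" and s: "0 < s"
    and excess_int: "integrable M (\<lambda>\<omega>. excess \<omega> powr q)"
    and moment: "\<forall>T\<in>sets M. measure M T \<le> K / H \<longrightarrow>
                   (\<integral>\<omega>. indicator T \<omega> * excess \<omega> powr q \<partial>M) \<le> l * s powr q"
    and variation: "\<forall>b\<in>Pi_pts (2 * (H - 2)) B.
                      real (2 * (H - 2)) powr (- 1 / q) * (\<Sum>i=2..2*(H-2). \<bar>m (b i) - m (b (i - 1))\<bar>) \<le> s / 2"
  shows "real H powr (- 2 / q) * (\<Sum>h=1..H. cond_var_event M (\<lambda>\<omega>. m (Y \<omega>)) (slice M Y a h)) \<le> 33 * s\<^sup>2"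
proof -
  define u where "u = s * real H powr (1 / q)"
  have "0 < real H"
    using H by simp
  have u_powr: "u powr q = s powr q * H"
    using s \<open>0 < real H\<close> q by (simp add: u_def powr_mult powr_powr)
  have "(real H powr (1 / q))\<^sup>2 = real H powr (2 / q)"
    using \<open>0 < real H\<close> by (simp add: powr_power)
  then have "real H powr (- 2 / q) * u\<^sup>2 = s\<^sup>2 * (real H powr (- 2 / q) * real H powr (2 / q))"
    by (simp add: u_def power_mult_distrib)
  also have "\<dots> = s\<^sup>2"
    using \<open>0 < real H\<close> by (simp add: powr_add[symmetric])
  finally have u_square: "real H powr (- 2 / q) * u\<^sup>2 = s\<^sup>2" .
  have "(\<Sum>h=1..H. cond_var_event M (\<lambda>\<omega>. m (Y \<omega>)) (slice M Y a h)) \<le> 33 * u\<^sup>2"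
  proof (rule sum_slice_cond_var_le[OF H a \<open>0 < l\<close> q _ excess_int])
    show "0 < u"
      using s \<open>0 < real H\<close> by (simp add: u_def)
    show "\<forall>T\<in>sets M. measure M T \<le> K / H \<longrightarrow>
        (\<integral>\<omega>. indicator T \<omega> * excess \<omega> powr q \<partial>M) \<le> l / H * u powr q"
      using moment \<open>0 < real H\<close> by (simp add: u_powr)
    show "\<forall>b\<in>Pi_pts (2 * (H - 2)) B. (\<Sum>i=2..2*(H-2). \<bar>m (b i) - m (b (i - 1))\<bar>) \<le> u"
      using variation H q s unfolding u_def by (auto intro!: le_of_powr_normalized_le)
  qed
  then have "real H powr (- 2 / q) * (\<Sum>h=1..H. cond_var_event M (\<lambda>\<omega>. m (Y \<omega>)) (slice M Y a h))
      \<le> real H powr (- 2 / q) * (33 * u\<^sup>2)"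
    by (intro mult_left_mono) auto
  also have "\<dots> = 33 * s\<^sup>2"
    using u_square by simp
  finally show ?thesis .
qed

theorem sum_slice_cond_var_vanishes:
  assumes q: "2 \<le> q" and "0 < l"
    and excess_int: "integrable M (\<lambda>\<omega>. excess \<omega> powr q)"
    and variation: "\<forall>e>0. \<exists>R. \<forall>r\<ge>R. \<forall>b\<in>Pi_pts r B.
                      real r powr (- 1 / q) * (\<Sum>i=2..r. \<bar>m (b i) - m (b (i - 1))\<bar>) \<le> e"
  shows "\<forall>e>0. \<exists>H0. \<forall>H\<ge>H0. \<forall>a\<in>A_part M Y H l K.
           real H powr (- 2 / q) * (\<Sum>h=1..H. cond_var_event M (\<lambda>\<omega>. m (Y \<omega>)) (slice M Y a h)) \<le> e"
proof (intro allI impI)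
  fix e :: real assume "0 < e"
  define s where "s = sqrt (e / 33)"
  have s: "0 < s" "33 * s\<^sup>2 = e"
    using \<open>0 < e\<close> by (auto simp: s_def)
  obtain \<rho> where "0 < \<rho>" and \<rho>: "\<forall>T\<in>sets M. measure M T \<le> \<rho> \<longrightarrow>
      (\<integral>\<omega>. indicator T \<omega> * excess \<omega> powr q \<partial>M) \<le> l * s powr q"
    using integral_indicator_small[OF prob_space_axioms excess_int, of "l * s powr q"] \<open>0 < l\<close> s
    by auto
  obtain R :: nat where R: "\<forall>r\<ge>R. \<forall>b\<in>Pi_pts r B.
      real r powr (- 1 / q) * (\<Sum>i=2..r. \<bar>m (b i) - m (b (i - 1))\<bar>) \<le> s / 2"
    using variation s by (meson half_gt_zero)
  obtain N :: nat where N: "K / \<rho> \<le> real N"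
    using real_arch_simple by blast
  have "real H powr (- 2 / q) * (\<Sum>h=1..H. cond_var_event M (\<lambda>\<omega>. m (Y \<omega>)) (slice M Y a h)) \<le> e"
    if H: "max N (R + 3) \<le> H" and a: "a \<in> A_part M Y H l K" for H a
  proof -
    have "K \<le> \<rho> * N"
      using N \<open>0 < \<rho>\<close> by (simp add: pos_divide_le_eq mult.commute)
    also have "\<dots> \<le> \<rho> * H"
      using H \<open>0 < \<rho>\<close> by (intro mult_left_mono) auto
    finally have "K / H \<le> \<rho>"
      using H by (simp add: divide_le_eq mult.commute)
    then have "\<forall>T\<in>sets M. measure M T \<le> K / H \<longrightarrow>
        (\<integral>\<omega>. indicator T \<omega> * excess \<omega> powr q \<partial>M) \<le> l * s powr q"
      using \<rho> by auto
    moreover have "R \<le> 2 * (H - 2)"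
      using H by linarith
    ultimately show ?thesis
      using scaled_sum_slice_cond_var_le[OF _ a \<open>0 < l\<close> q s(1) excess_int] R H s(2) by auto
  qed
  then show "\<exists>H0. \<forall>H\<ge>H0. \<forall>a\<in>A_part M Y H l K.
      real H powr (- 2 / q) * (\<Sum>h=1..H. cond_var_event M (\<lambda>\<omega>. m (Y \<omega>)) (slice M Y a h)) \<le> e"
    by blast
qed

end

theorem proposition1:
  fixes M :: "'a measure" and E :: "'e measure"
    and X :: "'a \<Rightarrow> real ^ 'p" and \<epsilon> :: "'a \<Rightarrow> 'e"
    and f :: "real \<Rightarrow> 'e \<Rightarrow> real" and Y :: "'a \<Rightarrow> real"
    and \<beta> :: "real ^ 'p" and s :: nat and j :: 'p
    and mj m :: "real \<Rightarrow> real" and \<xi> l K :: real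
  assumes "prob_space M"
    and X_rv: "X \<in> borel_measurable M"
    and X_indep: "prob_space.indep_vars M (\<lambda>_. borel) (\<lambda>i \<omega>. X \<omega> $ i) UNIV"
    and X_normal: "\<forall>i. distributed M lborel (\<lambda>\<omega>. X \<omega> $ i) std_normal_density"
    and eps_rv: "\<epsilon> \<in> measurable M E"
    and indep: "prob_space.indep_set M {X -` A \<inter> space M | A. A \<in> sets borel}
                                        {\<epsilon> -` A \<inter> space M | A. A \<in> sets E}"
    and f_meas: "case_prod f \<in> borel_measurable (borel \<Otimes>\<^sub>M E)"
    and Y_def: "\<forall>\<omega>\<in>space M. Y \<omega> = f (X \<omega> \<bullet> \<beta>) (\<epsilon> \<omega>)"
    and Y_cont: "\<forall>y. measure M {\<omega>\<in>space M. Y \<omega> = y} = 0"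
    and s_pos: "s > 0"
    and s_card: "card {i. \<beta> $ i \<noteq> 0} = s"
    and beta_entries: "\<forall>i. \<beta> $ i \<in> {1 / sqrt (real s), - 1 / sqrt (real s), 0}"
    and j_supp: "\<beta> $ j \<noteq> 0"
    and mj_meas: "mj \<in> borel_measurable borel"
    and mj_ce: "AE \<omega> in M. mj (Y \<omega>) =
                 real_cond_exp M (vimage_algebra (space M) Y borel) (\<lambda>\<omega>. X \<omega> $ j) \<omega>"
    and var_pos: "prob_space.variance M (\<lambda>\<omega>. mj (Y \<omega>)) > 0"
    and m_def: "m = (\<lambda>y. sgn (\<beta> $ j) * mj y / sqrt (prob_space.variance M (\<lambda>\<omega>. mj (Y \<omega>))))"
    and xi_pos: "\<xi> > 0"
    and cond_i: "\<forall>B>0. \<forall>e>0. \<exists>R. \<forall>r\<ge>R. \<forall>b\<in>Pi_pts r B.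
                   real r powr (- 1 / (2 + \<xi>)) * (\<Sum>i=2..r. \<bar>m (b i) - m (b (i - 1))\<bar>) \<le> e"
    and cond_ii: "\<exists>B0>0. \<exists>mt :: real \<Rightarrow> real.
                   mono_on {B0<..} mt \<and>
                   (\<forall>x y. ((x < - B0 \<and> y < - B0) \<or> (x > B0 \<and> y > B0)) \<longrightarrow>
                          \<bar>m x - m y\<bar> \<le> \<bar>mt \<bar>x\<bar> - mt \<bar>y\<bar>\<bar>) \<and>
                   integrable M (\<lambda>\<omega>. \<bar>(if \<bar>Y \<omega>\<bar> \<le> B0 then 0 else mt \<bar>Y \<omega>\<bar>)\<bar> powr (2 + \<xi>))"
    and l_pos: "0 < l" and l_lt: "l < 1" and K_gt: "1 < K"
  shows "\<forall>e>0. \<exists>H0. \<forall>H\<ge>H0. \<forall>a\<in>A_part M Y H l K.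
           real H powr (- 2 / (2 + \<xi>)) *
           (\<Sum>h=1..H. cond_var_event M (\<lambda>\<omega>. m (Y \<omega>))
                {\<omega>\<in>space M. a h < ereal (Y \<omega>) \<and> ereal (Y \<omega>) \<le> a (Suc h)}) \<le> e"
proof -
  obtain B0 mt where "0 < B0" and mt_mono: "mono_on {B0<..} mt"
    and tail: "\<forall>x y. ((x < - B0 \<and> y < - B0) \<or> (x > B0 \<and> y > B0)) \<longrightarrow>
                 \<bar>m x - m y\<bar> \<le> \<bar>mt \<bar>x\<bar> - mt \<bar>y\<bar>\<bar>"
    and tail_moment: "integrable M (\<lambda>\<omega>. \<bar>(if \<bar>Y \<omega>\<bar> \<le> B0 then 0 else mt \<bar>Y \<omega>\<bar>)\<bar> powr (2 + \<xi>))"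
    using cond_ii by blast
  have "(\<lambda>\<omega>. f (X \<omega> \<bullet> \<beta>) (\<epsilon> \<omega>)) \<in> borel_measurable M"
    using measurable_compose[OF _ f_meas, of "\<lambda>\<omega>. (X \<omega> \<bullet> \<beta>, \<epsilon> \<omega>)"] X_rv eps_rv by simp
  then have "Y \<in> borel_measurable M"
    using Y_def by (subst measurable_cong) auto
  moreover have "m \<in> borel_measurable borel"
    unfolding m_def using mj_meas by measurable
  ultimately interpret tail_dominated M Y m mt B0 "B0 + 1"
    using \<open>prob_space M\<close> Y_cont \<open>0 < B0\<close> mt_mono tail
    by (simp add: tail_dominated_def tail_dominated_axioms_def)
  have "2 \<le> 2 + \<xi>" "0 < 2 + \<xi>"
    using xi_pos by auto
  from sum_slice_cond_var_vanishes[OF this(1) l_pos integrable_excess_powr[OF this(2) tail_moment]]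
  show ?thesis
    using cond_i \<open>0 < B0\<close> unfolding slice_def by simp
qed

end
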